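(* Let $\mathcal G=((V,E),(V_1,V_2,V_\Diamond),\delta,w)$ be a stochastic game and $\varphi$ a bounded prefix-independent objective. Consider the classes of the expected value vector $\mathsf r^*=(\mathbb{E}_v(\varphi))_{v\in V}$, and suppose exactly $m\ge1$ of them contain boundary vertices. Index the classes as $C_1,\dots,C_k$ so that $C_1,\dots,C_m$ are those containing boundary vertices, in increasing order of value, and $C_{m+1},\dots,C_k$ are those without boundary vertices, in increasing order of value. For $1\le i\le m$ fix a boundary vertex $u_i$ of $C_i$ and for $1\le j\le k$ let $p_{i,j}=\sum_{v'\in E(u_i)\cap C_j}\delta(u_i)(v')$. Let $Q_B=(p_{i,j})_{1\le i,j\le m}$, $I$ the $m\times m$ identity matrix, $\alpha$ the least common multiple of the denominators of the $p_{i,j}$ ($1\le i\le m$, $1\le j\le k$), and $D=\det(\alpha(I-Q_B))$. Let $N$ be the maximum denominator (in lowest terms) of the probabilities $\delta(v)(v')$ occurring in $\mathcal G$. Then $D$ is an integer and $|D|\le(2\alpha)^m\le 2^{|V|}\cdot N^{|V|^3}$.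
   Context: A stochastic game is $\mathcal{G}=((V,E),(V_1,V_2,V_\Diamond),\delta,w)$: a finite directed graph $(V,E)$ in which every vertex $v$ has a nonempty out-neighbour set $E(v)$, a partition of $V$ into Player 1, Player 2 and probabilistic vertices, a function $\delta$ giving each $v\in V_\Diamond$ a rational probability distribution $\delta(v)$ on $E(v)$, positive on every out-neighbour, and payoffs $w:E\to\mathbb{Q}$. Plays are infinite paths; deterministic strategies of Player $i$ map finite prefixes ending in $V_i$ to an out-neighbour of the last vertex; a strategy pair and initial vertex induce a probability measure on plays. An objective $\varphi$ is a Borel-measurable real function on plays; bounded if $|\varphi|\le W_\varphi$ for an integer $W_\varphi$; prefix-independent if plays with a common suffix get equal value. $\mathbb{E}_v(\varphi)=\sup_{\sigma_1}\inf_{\sigma_2}\mathbb{E}^{\sigma_1,\sigma_2}_v[\varphi]=\inf_{\sigma_2}\sup_{\sigma_1}\mathbb{E}^{\sigma_1,\sigma_2}_v[\varphi]$ (Player 1 maximises, Player 2 minimises). For a real vector $\mathsf r$ indexed by $V$, its classes are the maximal nonempty sets of vertices on which $\mathsf r$ is constant (the constant being the class value); a vertex $v$ of class $C$ is a boundary vertex if $v\in V_\Diamond$ and $E(v)\not\subseteq C$. *)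

theory Defs
  imports "HOL-Probability.Probability" "Jordan_Normal_Form.Determinant"
begin

definition succ :: "('v \<times> 'v) set \<Rightarrow> 'v \<Rightarrow> 'v set" where
  "succ E v = {v'. (v, v') \<in> E}"

definition stochastic_game ::
  "'v set \<Rightarrow> ('v \<times> 'v) set \<Rightarrow> 'v set \<Rightarrow> 'v set \<Rightarrow> 'v set \<Rightarrow> ('v \<Rightarrow> 'v \<Rightarrow> rat) \<Rightarrow> ('v \<times> 'v \<Rightarrow> rat) \<Rightarrow> bool" where
  "stochastic_game V E V1 V2 VP \<delta> w \<longleftrightarrow>
     finite V \<and> E \<subseteq> V \<times> V \<and> (\<forall>v\<in>V. succ E v \<noteq> {}) \<and>
     V1 \<union> V2 \<union> VP = V \<and> V1 \<inter> V2 = {} \<and> V1 \<inter> VP = {} \<and> V2 \<inter> VP = {} \<and>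
     (\<forall>v\<in>VP. (\<forall>v'\<in>succ E v. \<delta> v v' > 0) \<and> (\<Sum>v'\<in>succ E v. \<delta> v v') = 1)"

definition is_path :: "('v \<times> 'v) set \<Rightarrow> 'v list \<Rightarrow> bool" where
  "is_path E h \<longleftrightarrow> h \<noteq> [] \<and> (\<forall>i. Suc i < length h \<longrightarrow> (h ! i, h ! Suc i) \<in> E)"

definition is_play :: "('v \<times> 'v) set \<Rightarrow> (nat \<Rightarrow> 'v) \<Rightarrow> bool" where
  "is_play E \<rho> \<longleftrightarrow> (\<forall>n. (\<rho> n, \<rho> (Suc n)) \<in> E)"

definition strategy :: "('v \<times> 'v) set \<Rightarrow> 'v set \<Rightarrow> ('v list \<Rightarrow> 'v) \<Rightarrow> bool" where
  "strategy E Vi \<sigma> \<longleftrightarrow> (\<forall>h. is_path E h \<and> last h \<in> Vi \<longrightarrow> (last h, \<sigma> h) \<in> E)"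

definition delta_pmf :: "('v \<times> 'v) set \<Rightarrow> ('v \<Rightarrow> 'v \<Rightarrow> rat) \<Rightarrow> 'v \<Rightarrow> 'v pmf" where
  "delta_pmf E \<delta> v = embed_pmf (\<lambda>v'. if (v, v') \<in> E then real_of_rat (\<delta> v v') else 0)"

text \<open>One round of randomness: independently for every probabilistic vertex a successor
  drawn according to its distribution.\<close>
definition choice_pmf :: "'v set \<Rightarrow> ('v \<times> 'v) set \<Rightarrow> ('v \<Rightarrow> 'v \<Rightarrow> rat) \<Rightarrow> ('v \<Rightarrow> 'v) pmf" where
  "choice_pmf VP E \<delta> = Pi_pmf VP undefined (delta_pmf E \<delta>)"

primrec hist :: "'v set \<Rightarrow> 'v set \<Rightarrow> ('v list \<Rightarrow> 'v) \<Rightarrow> ('v list \<Rightarrow> 'v) \<Rightarrow> 'v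
     \<Rightarrow> (nat \<Rightarrow> 'v \<Rightarrow> 'v) \<Rightarrow> nat \<Rightarrow> 'v list" where
  "hist V1 V2 \<sigma>1 \<sigma>2 v0 \<omega> 0 = [v0]"
| "hist V1 V2 \<sigma>1 \<sigma>2 v0 \<omega> (Suc n) =
     (let h = hist V1 V2 \<sigma>1 \<sigma>2 v0 \<omega> n; u = last h in
      h @ [if u \<in> V1 then \<sigma>1 h else if u \<in> V2 then \<sigma>2 h else \<omega> n u])"

definition play :: "'v set \<Rightarrow> 'v set \<Rightarrow> ('v list \<Rightarrow> 'v) \<Rightarrow> ('v list \<Rightarrow> 'v) \<Rightarrow> 'v
     \<Rightarrow> (nat \<Rightarrow> 'v \<Rightarrow> 'v) \<Rightarrow> nat \<Rightarrow> 'v" where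
  "play V1 V2 \<sigma>1 \<sigma>2 v0 \<omega> n = last (hist V1 V2 \<sigma>1 \<sigma>2 v0 \<omega> n)"

definition play_measure :: "'v set \<Rightarrow> 'v set \<Rightarrow> 'v set \<Rightarrow> ('v \<times> 'v) set \<Rightarrow> ('v \<Rightarrow> 'v \<Rightarrow> rat)
     \<Rightarrow> ('v list \<Rightarrow> 'v) \<Rightarrow> ('v list \<Rightarrow> 'v) \<Rightarrow> 'v \<Rightarrow> (nat \<Rightarrow> 'v) measure" where
  "play_measure V1 V2 VP E \<delta> \<sigma>1 \<sigma>2 v0 =
     distr (PiM UNIV (\<lambda>_::nat. measure_pmf (choice_pmf VP E \<delta>)))
           (PiM UNIV (\<lambda>_::nat. count_space UNIV))
           (play V1 V2 \<sigma>1 \<sigma>2 v0)"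

definition game_value :: "'v set \<Rightarrow> 'v set \<Rightarrow> 'v set \<Rightarrow> ('v \<times> 'v) set \<Rightarrow> ('v \<Rightarrow> 'v \<Rightarrow> rat)
     \<Rightarrow> ((nat \<Rightarrow> 'v) \<Rightarrow> real) \<Rightarrow> 'v \<Rightarrow> real" where
  "game_value V1 V2 VP E \<delta> \<phi> v =
     (SUP \<sigma>1\<in>{\<sigma>. strategy E V1 \<sigma>}. INF \<sigma>2\<in>{\<sigma>. strategy E V2 \<sigma>}.
        integral\<^sup>L (play_measure V1 V2 VP E \<delta> \<sigma>1 \<sigma>2 v) \<phi>)"

definition bounded_objective :: "('v \<times> 'v) set \<Rightarrow> ((nat \<Rightarrow> 'v) \<Rightarrow> real) \<Rightarrow> bool" where
  "bounded_objective E \<phi> \<longleftrightarrow> (\<exists>W::int. \<forall>\<rho>. is_play E \<rho> \<longrightarrow> \<bar>\<phi> \<rho>\<bar> \<le> of_int W)"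

definition prefix_independent :: "('v \<times> 'v) set \<Rightarrow> ((nat \<Rightarrow> 'v) \<Rightarrow> real) \<Rightarrow> bool" where
  "prefix_independent E \<phi> \<longleftrightarrow>
     (\<forall>\<rho> \<rho>' i j. is_play E \<rho> \<and> is_play E \<rho>' \<and> (\<forall>n. \<rho> (i + n) = \<rho>' (j + n)) \<longrightarrow> \<phi> \<rho> = \<phi> \<rho>')"

definition value_classes :: "'v set \<Rightarrow> ('v \<Rightarrow> real) \<Rightarrow> 'v set set" where
  "value_classes V val = {{x \<in> V. val x = val y} | y. y \<in> V}"

definition is_boundary :: "'v set \<Rightarrow> ('v \<times> 'v) set \<Rightarrow> 'v set \<Rightarrow> 'v \<Rightarrow> bool" where
  "is_boundary VP E C v \<longleftrightarrow> v \<in> C \<and> v \<in> VP \<and> \<not> succ E v \<subseteq> C"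

end

theory Submission
  imports Defs
begin

(* The game values enter only through the fact that the classes C_1, ..., C_k are pairwise
   disjoint. Hence every row of the substochastic matrix Q_B sums to at most 1, so every row of
   alpha (I - Q_B) has absolute sum at most 2 alpha, and expanding the determinant over
   permutations gives |D| <= (2 alpha)^m; D is an integer because alpha clears every denominator
   of Q_B. Each p_ij is a sum of transition probabilities, so alpha divides the lcm of all
   transition denominators. That lcm divides their product, which is at most
   N^|E| <= N^(|V|^2), and m <= k <= |V| finishes the bound. *)

lemma abs_det_le_prod_row_sums:
  fixes A :: "'a::linordered_idom mat"
  assumes A: "A \<in> carrier_mat n n"
  shows "\<bar>det A\<bar> \<le> (\<Prod>i = 0..<n. \<Sum>j = 0..<n. \<bar>A $$ (i, j)\<bar>)"
proof -
  let ?h = "\<lambda>f. \<Prod>i = 0..<n. \<bar>A $$ (i, f i)\<bar>"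
  have "\<bar>det A\<bar> \<le> (\<Sum>p | p permutes {0..<n}. \<bar>signof p * (\<Prod>i = 0..<n. A $$ (i, p i))\<bar>)"
    unfolding det_def'[OF A] by (rule sum_abs)
  also have "\<dots> = (\<Sum>p | p permutes {0..<n}. ?h p)"
    by (intro sum.cong) (auto simp: abs_mult abs_prod sign_def)
  also have "\<dots> \<le> (\<Sum>f \<in> {0..<n} \<rightarrow>\<^sub>E {0..<n}. ?h f)"
  \<comment> \<open>a permutation is recovered from its restriction to {0..<n} by extending it with the identity\<close>
  proof (rule sum_le_included[where i = "\<lambda>f x. if x < n then f x else x"])
    show "\<forall>p\<in>{p. p permutes {0..<n}}. \<exists>f\<in>{0..<n} \<rightarrow>\<^sub>E {0..<n}.
        (\<lambda>x. if x < n then f x else x) = p \<and> ?h p \<le> ?h f"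
    proof
      fix p assume p: "p \<in> {p. p permutes {0..<n}}"
      then have "restrict p {0..<n} \<in> {0..<n} \<rightarrow>\<^sub>E {0..<n}"
        using permutes_in_image by fastforce
      moreover have "(\<lambda>x. if x < n then restrict p {0..<n} x else x) = p"
        using p by (auto simp: permutes_def)
      ultimately show "\<exists>f\<in>{0..<n} \<rightarrow>\<^sub>E {0..<n}. (\<lambda>x. if x < n then f x else x) = p \<and> ?h p \<le> ?h f"
        by force
    qed
  qed (auto simp: finite_permutations finite_PiE prod_nonneg)
  also have "\<dots> = (\<Prod>i = 0..<n. \<Sum>j = 0..<n. \<bar>A $$ (i, j)\<bar>)"
    by (rule prod_sum_PiE[symmetric]) auto
  finally show ?thesis .
qed

lemma det_Ints:
  fixes A :: "'a::linordered_idom mat"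
  assumes A: "A \<in> carrier_mat n n" and I: "\<And>i j. i < n \<Longrightarrow> j < n \<Longrightarrow> A $$ (i, j) \<in> \<int>"
  shows "det A \<in> \<int>"
  unfolding det_def'[OF A]
proof (intro Ints_sum Ints_mult)
  fix p assume "p \<in> {p. p permutes {0..<n}}"
  then have "\<And>i. i < n \<Longrightarrow> p i < n" using permutes_in_image by fastforce
  then show "(\<Prod>i = 0..<n. A $$ (i, p i)) \<in> \<int>" by (intro Ints_prod I) auto
qed simp

lemma abs_det_scaled_id_minus_substochastic_le:
  fixes Q :: "nat \<Rightarrow> nat \<Rightarrow> 'a::linordered_idom"
  assumes a: "0 \<le> a"
    and Q_nonneg: "\<And>i j. i < n \<Longrightarrow> j < n \<Longrightarrow> 0 \<le> Q i j"
    and Q_row: "\<And>i. i < n \<Longrightarrow> (\<Sum>j<n. Q i j) \<le> 1"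
  shows "\<bar>det (mat n n (\<lambda>(i, j). a * ((if i = j then 1 else 0) - Q i j)))\<bar> \<le> (2 * a) ^ n"
    (is "\<bar>det ?M\<bar> \<le> _")
proof -
  have row: "(\<Sum>j = 0..<n. \<bar>?M $$ (i, j)\<bar>) \<le> 2 * a" if i: "i < n" for i
  proof -
    have "(\<Sum>j = 0..<n. \<bar>?M $$ (i, j)\<bar>)
        \<le> (\<Sum>j = 0..<n. a * ((if i = j then 1 else 0) + Q i j))"
      using a Q_nonneg i by (intro sum_mono) (auto simp: abs_mult abs_le_iff intro!: mult_left_mono)
    also have "\<dots> = a * (1 + (\<Sum>j<n. Q i j))"
      using i by (simp add: sum_distrib_left[symmetric] sum.distrib atLeast0LessThan)
    also have "\<dots> \<le> a * 2"
      using Q_row[OF i] a by (intro mult_left_mono) auto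
    finally show ?thesis by (simp add: mult.commute)
  qed
  have "\<bar>det ?M\<bar> \<le> (\<Prod>i = 0..<n. \<Sum>j = 0..<n. \<bar>?M $$ (i, j)\<bar>)"
    by (rule abs_det_le_prod_row_sums) simp
  also have "\<dots> \<le> (\<Prod>i = 0..<n. 2 * a)"
    using row by (intro prod_mono) (auto intro: sum_nonneg)
  finally show ?thesis by simp
qed

lemma det_scaled_id_minus_Ints:
  fixes Q :: "nat \<Rightarrow> nat \<Rightarrow> 'a::linordered_idom"
  assumes "a \<in> \<int>" and "\<And>i j. i < n \<Longrightarrow> j < n \<Longrightarrow> a * Q i j \<in> \<int>"
  shows "det (mat n n (\<lambda>(i, j). a * ((if i = j then 1 else 0) - Q i j))) \<in> \<int>"
  using assms by (intro det_Ints[of _ n]) (auto simp: right_diff_distrib)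

lemma denom_dvd_iff_mult_Ints: "snd (quotient_of q) dvd a \<longleftrightarrow> (of_int a :: rat) * q \<in> \<int>"
proof -
  obtain n d where qd: "quotient_of q = (n, d)" by (cases "quotient_of q")
  have d: "d > 0" and cop: "coprime n d" and q: "q = of_int n / of_int d"
    using quotient_of_denom_pos[OF qd] quotient_of_coprime[OF qd] quotient_of_div[OF qd] .
  have "(of_int a :: rat) * q \<in> \<int> \<longleftrightarrow> (\<exists>z. a * n = z * d)"
  proof
    assume "(of_int a :: rat) * q \<in> \<int>"
    then obtain z where "(of_int a :: rat) * q = of_int z" by (auto elim: Ints_cases)
    then have "(of_int (a * n) :: rat) = of_int (z * d)" using d q by (simp add: field_simps)
    then show "\<exists>z. a * n = z * d" by (metis of_int_eq_iff)
  next
    assume "\<exists>z. a * n = z * d"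
    then obtain z where z: "a * n = z * d" ..
    have "(of_int a :: rat) * q = of_int (a * n) / of_int d" by (simp add: q)
    also have "\<dots> = of_int z" using z d by simp
    finally show "(of_int a :: rat) * q \<in> \<int>" by simp
  qed
  also have "\<dots> \<longleftrightarrow> d dvd a * n" by (auto simp: dvd_def mult.commute)
  also have "\<dots> \<longleftrightarrow> d dvd a" using cop by (simp add: coprime_commute coprime_dvd_mult_left_iff)
  finally show ?thesis using qd by simp
qed

lemma denom_sum_dvd:
  assumes "\<And>x. x \<in> A \<Longrightarrow> snd (quotient_of (f x)) dvd a"
  shows "snd (quotient_of (\<Sum>x\<in>A. f x)) dvd a"
  using assms by (simp add: denom_dvd_iff_mult_Ints sum_distrib_left Ints_sum)

lemma Lcm_le_Max_power_card:
  fixes S :: "int set"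
  assumes fin: "finite S" and pos: "\<And>s. s \<in> S \<Longrightarrow> 0 < s"
  shows "Lcm S \<le> Max S ^ card S"
proof -
  have "Lcm S dvd \<Prod>S"
    by (rule Lcm_least, rule dvd_prod_eqI[OF fin]) auto
  then have "Lcm S \<le> \<Prod>S"
    using pos by (intro zdvd_imp_le prod_pos)
  also have "\<dots> \<le> (\<Prod>s\<in>S. Max S)"
    using fin pos by (intro prod_mono) (auto simp: less_imp_le)
  finally show ?thesis by simp
qed

lemma value_classes_disjoint:
  "A \<in> value_classes V r \<Longrightarrow> B \<in> value_classes V r \<Longrightarrow> A \<noteq> B \<Longrightarrow> A \<inter> B = {}"
  by (auto simp: value_classes_def)

lemma disjoint_family_on_value_classes:
  assumes C: "bij_betw C I (value_classes V r)"
  shows "disjoint_family_on C I"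
proof (unfold disjoint_family_on_def, intro ballI impI)
  fix i j assume ij: "i \<in> I" "j \<in> I" "i \<noteq> j"
  then have "C i \<noteq> C j" using bij_betw_imp_inj_on[OF C] by (auto dest: inj_onD)
  then show "C i \<inter> C j = {}"
    by (rule value_classes_disjoint[OF bij_betw_apply[OF C ij(1)] bij_betw_apply[OF C ij(2)]])
qed

lemma card_value_classes_le: "finite V \<Longrightarrow> card (value_classes V r) \<le> card V"
proof -
  assume "finite V"
  moreover have "value_classes V r = (\<lambda>y. {x \<in> V. r x = r y}) ` V"
    by (auto simp: value_classes_def)
  ultimately show ?thesis by (simp add: card_image_le)
qed

definition prob_denominators :: "'v set \<Rightarrow> ('v \<times> 'v) set \<Rightarrow> ('v \<Rightarrow> 'v \<Rightarrow> rat) \<Rightarrow> int set" where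
  "prob_denominators VP E \<delta> = {snd (quotient_of (\<delta> v v')) | v v'. v \<in> VP \<and> (v, v') \<in> E}"

lemma prob_denominators_pos: "s \<in> prob_denominators VP E \<delta> \<Longrightarrow> 0 < s"
  by (auto simp: prob_denominators_def quotient_of_denom_pos')

context
  fixes V :: "'v set" and E :: "('v \<times> 'v) set" and V1 V2 VP :: "'v set"
    and \<delta> :: "'v \<Rightarrow> 'v \<Rightarrow> rat" and w :: "'v \<times> 'v \<Rightarrow> rat"
  assumes game: "stochastic_game V E V1 V2 VP \<delta> w"
begin

lemma finite_vertices: "finite V"
  and edges_subset: "E \<subseteq> V \<times> V"
  and succ_nonempty: "v \<in> V \<Longrightarrow> succ E v \<noteq> {}"
  and prob_vertices_subset: "VP \<subseteq> V"
  and succ_prob_pos: "v \<in> VP \<Longrightarrow> v' \<in> succ E v \<Longrightarrow> 0 < \<delta> v v'"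
  and sum_succ_prob: "v \<in> VP \<Longrightarrow> (\<Sum>v'\<in>succ E v. \<delta> v v') = 1"
  using game unfolding stochastic_game_def by (elim conjE; blast)+

lemma finite_edges: "finite E"
  using finite_vertices edges_subset by (meson finite_SigmaI finite_subset)

lemma finite_succ: "finite (succ E v)"
proof -
  have "succ E v \<subseteq> snd ` E" by (force simp: succ_def)
  then show ?thesis using finite_edges by (meson finite_imageI finite_subset)
qed

lemma finite_prob_denominators: "finite (prob_denominators VP E \<delta>)"
  and card_prob_denominators_le: "card (prob_denominators VP E \<delta>) \<le> card V ^ 2"
proof -
  have img: "prob_denominators VP E \<delta> = (\<lambda>(v, v'). snd (quotient_of (\<delta> v v'))) ` {e \<in> E. fst e \<in> VP}"
    unfolding prob_denominators_def by force
  then show "finite (prob_denominators VP E \<delta>)" using finite_edges by simp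
  have "card (prob_denominators VP E \<delta>) \<le> card E"
    unfolding img using finite_edges by (intro card_image_le[THEN order_trans] card_mono) auto
  also have "\<dots> \<le> card (V \<times> V)"
    using finite_vertices edges_subset by (intro card_mono) auto
  finally show "card (prob_denominators VP E \<delta>) \<le> card V ^ 2"
    by (simp add: card_cartesian_product power2_eq_square)
qed

lemma Max_prob_denominators_ge_1:
  assumes "VP \<noteq> {}"
  shows "1 \<le> Max (prob_denominators VP E \<delta>)"
proof -
  obtain v where v: "v \<in> VP" using assms by blast
  then obtain v' where "(v, v') \<in> E"
    using succ_nonempty prob_vertices_subset unfolding succ_def by blast
  then have "prob_denominators VP E \<delta> \<noteq> {}"
    using v unfolding prob_denominators_def by blast
  then have "Max (prob_denominators VP E \<delta>) \<in> prob_denominators VP E \<delta>"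
    using finite_prob_denominators by (rule Max_in[rotated])
  then show ?thesis using prob_denominators_pos by fastforce
qed

lemma Lcm_prob_denominators_le:
  assumes "VP \<noteq> {}"
  shows "Lcm (prob_denominators VP E \<delta>) \<le> Max (prob_denominators VP E \<delta>) ^ card V ^ 2"
proof -
  have "Lcm (prob_denominators VP E \<delta>) \<le> Max (prob_denominators VP E \<delta>) ^ card (prob_denominators VP E \<delta>)"
    using finite_prob_denominators prob_denominators_pos by (rule Lcm_le_Max_power_card)
  also have "\<dots> \<le> Max (prob_denominators VP E \<delta>) ^ card V ^ 2"
    using card_prob_denominators_le Max_prob_denominators_ge_1[OF assms] by (rule power_increasing)
  finally show ?thesis .
qed

lemma Lcm_prob_denominators_pos: "0 < Lcm (prob_denominators VP E \<delta>)"
proof -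
  have "Lcm (prob_denominators VP E \<delta>) \<noteq> 0"
    using prob_denominators_pos[of 0] by (auto simp: Lcm_0_iff finite_prob_denominators)
  then show ?thesis by (simp add: order.not_eq_order_implies_strict)
qed

lemma denom_succ_prob_dvd_Lcm:
  assumes "v \<in> VP"
  shows "snd (quotient_of (\<Sum>v'\<in>succ E v \<inter> A. \<delta> v v')) dvd Lcm (prob_denominators VP E \<delta>)"
proof (rule denom_sum_dvd, rule dvd_Lcm)
  fix v' assume "v' \<in> succ E v \<inter> A"
  then show "snd (quotient_of (\<delta> v v')) \<in> prob_denominators VP E \<delta>"
    using assms unfolding prob_denominators_def succ_def by blast
qed

lemma Lcm_class_prob_denominators_le:
  assumes "u ` I \<subseteq> VP"
  shows "Lcm {snd (quotient_of (\<Sum>v'\<in>succ E (u i) \<inter> C j. \<delta> (u i) v')) | i j. i \<in> I \<and> j \<in> J}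
    \<le> Lcm (prob_denominators VP E \<delta>)"
proof (rule zdvd_imp_le[OF _ Lcm_prob_denominators_pos], rule Lcm_least)
  fix d assume "d \<in> {snd (quotient_of (\<Sum>v'\<in>succ E (u i) \<inter> C j. \<delta> (u i) v')) | i j. i \<in> I \<and> j \<in> J}"
  then show "d dvd Lcm (prob_denominators VP E \<delta>)"
    using assms by (auto intro: denom_succ_prob_dvd_Lcm)
qed

lemma two_mult_power_le_Max_prob_denominators:
  fixes a :: int
  assumes VP: "VP \<noteq> {}" and a: "0 \<le> a" "a \<le> Lcm (prob_denominators VP E \<delta>)" and m: "m \<le> card V"
  shows "(2 * a) ^ m \<le> 2 ^ card V * Max (prob_denominators VP E \<delta>) ^ card V ^ 3"
proof -
  let ?N = "Max (prob_denominators VP E \<delta>)" and ?n = "card V"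
  have "a ^ m \<le> (?N ^ ?n\<^sup>2) ^ m"
    using a Lcm_prob_denominators_le[OF VP] by (intro power_mono) auto
  also have "\<dots> \<le> (?N ^ ?n\<^sup>2) ^ ?n"
    using Max_prob_denominators_ge_1[OF VP] m by (intro power_increasing) auto
  also have "\<dots> = ?N ^ ?n ^ 3"
    by (simp flip: power_mult add: power2_eq_square power3_eq_cube)
  finally have "a ^ m \<le> ?N ^ ?n ^ 3" .
  moreover have "(2::int) ^ m \<le> 2 ^ ?n"
    using m by (rule power_increasing) simp
  ultimately show ?thesis
    using a by (simp add: power_mult_distrib mult_mono)
qed

lemma succ_prob_nonneg:
  assumes "v \<in> VP"
  shows "0 \<le> (\<Sum>v'\<in>succ E v \<inter> A. \<delta> v v')"
  using succ_prob_pos[OF assms] by (intro sum_nonneg less_imp_le) blast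

lemma sum_succ_prob_disjoint_le_1:
  assumes v: "v \<in> VP" and I: "finite I" and disj: "disjoint_family_on C I"
  shows "(\<Sum>j\<in>I. \<Sum>v'\<in>succ E v \<inter> C j. \<delta> v v') \<le> 1"
proof -
  have "(\<Sum>j\<in>I. \<Sum>v'\<in>succ E v \<inter> C j. \<delta> v v') = (\<Sum>v'\<in>(\<Union>j\<in>I. succ E v \<inter> C j). \<delta> v v')"
    using I disj finite_succ
    by (intro sum.UNION_disjoint[symmetric]) (auto simp: disjoint_family_on_def)
  also have "\<dots> \<le> (\<Sum>v'\<in>succ E v. \<delta> v v')"
    using finite_succ succ_prob_pos[OF v] by (intro sum_mono2) (auto intro: less_imp_le)
  also have "\<dots> = 1" using sum_succ_prob[OF v] .
  finally show ?thesis .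
qed

end

theorem proposition13:
  fixes V :: "'v set" and E :: "('v \<times> 'v) set" and V1 V2 VP :: "'v set"
    and \<delta> :: "'v \<Rightarrow> 'v \<Rightarrow> rat" and w :: "'v \<times> 'v \<Rightarrow> rat"
    and \<phi> :: "(nat \<Rightarrow> 'v) \<Rightarrow> real"
    and k m :: nat and C :: "nat \<Rightarrow> 'v set" and u :: "nat \<Rightarrow> 'v"
  defines "r \<equiv> game_value V1 V2 VP E \<delta> \<phi>"
  assumes game: "stochastic_game V E V1 V2 VP \<delta> w"
    and meas: "\<phi> \<in> borel_measurable (PiM UNIV (\<lambda>_::nat. count_space UNIV))"
    and bnd: "bounded_objective E \<phi>"
    and pind: "prefix_independent E \<phi>"
    and m1: "1 \<le> m" and mk: "m \<le> k"
    and Cbij: "bij_betw C {1..k} (value_classes V r)"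
    and Cbd: "\<forall>i\<in>{1..m}. \<exists>v. is_boundary VP E (C i) v"
    and Cnbd: "\<forall>i\<in>{m+1..k}. \<not> (\<exists>v. is_boundary VP E (C i) v)"
    and ord1: "\<forall>i\<in>{1..m}. \<forall>j\<in>{1..m}. \<forall>v\<in>C i. \<forall>v'\<in>C j. i < j \<longrightarrow> r v < r v'"
    and ord2: "\<forall>i\<in>{m+1..k}. \<forall>j\<in>{m+1..k}. \<forall>v\<in>C i. \<forall>v'\<in>C j. i < j \<longrightarrow> r v < r v'"
    and ub: "\<forall>i\<in>{1..m}. is_boundary VP E (C i) (u i)"
  shows
    "let p = (\<lambda>i j. \<Sum>v'\<in>succ E (u i) \<inter> C j. \<delta> (u i) v');
         \<alpha> = Lcm {snd (quotient_of (p i j)) | i j. i \<in> {1..m} \<and> j \<in> {1..k}};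
         D = Determinant.det (Matrix.mat m m (\<lambda>(i, j).
               of_int \<alpha> * ((if i = j then 1 else 0) - p (Suc i) (Suc j))));
         N = Max {snd (quotient_of (\<delta> v v')) | v v'. v \<in> VP \<and> (v, v') \<in> E}
     in D \<in> \<int> \<and> \<bar>D\<bar> \<le> (2 * of_int \<alpha>) ^ m \<and>
        (2 * \<alpha>) ^ m \<le> 2 ^ card V * N ^ (card V ^ 3)"
proof -
  define p where "p = (\<lambda>i j. \<Sum>v'\<in>succ E (u i) \<inter> C j. \<delta> (u i) v')"
  define \<alpha> where "\<alpha> = Lcm {snd (quotient_of (p i j)) | i j. i \<in> {1..m} \<and> j \<in> {1..k}}"
  have u: "u ` {1..m} \<subseteq> VP"
    using ub by (auto simp: is_boundary_def)
  have m_le: "m \<le> card V"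
    using mk bij_betw_same_card[OF Cbij] card_value_classes_le[OF finite_vertices[OF game], of r] by simp
  have disj: "disjoint_family_on C {1..m}"
    using mk by (intro disjoint_family_on_mono[OF _ disjoint_family_on_value_classes[OF Cbij]]) auto
  have rows: "(\<Sum>j<m. p (Suc i) (Suc j)) \<le> 1" if "i < m" for i
  proof -
    have "(\<Sum>j\<in>{1..m}. p (Suc i) j) \<le> 1"
      unfolding p_def using u that by (intro sum_succ_prob_disjoint_le_1[OF game _ _ disj]) auto
    then show ?thesis by (simp add: sum.atLeast1_atMost_eq)
  qed
  have \<alpha>_clears: "of_int \<alpha> * p i j \<in> \<int>" if "i \<in> {1..m}" "j \<in> {1..k}" for i j
    unfolding \<alpha>_def denom_dvd_iff_mult_Ints[symmetric] using that by (intro dvd_Lcm) blast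
  have \<alpha>_le: "\<alpha> \<le> Lcm (prob_denominators VP E \<delta>)"
    unfolding \<alpha>_def p_def using u by (rule Lcm_class_prob_denominators_le[OF game])
  have "det (mat m m (\<lambda>(i, j). of_int \<alpha> * ((if i = j then 1 else 0) - p (Suc i) (Suc j)))) \<in> \<int>"
    using \<alpha>_clears mk by (intro det_scaled_id_minus_Ints) auto
  moreover have "\<bar>det (mat m m (\<lambda>(i, j). of_int \<alpha> * ((if i = j then 1 else 0) - p (Suc i) (Suc j))))\<bar>
      \<le> (2 * of_int \<alpha>) ^ m"
    using rows u unfolding p_def
    by (intro abs_det_scaled_id_minus_substochastic_le succ_prob_nonneg[OF game]) (auto simp: \<alpha>_def)
  moreover have "(2 * \<alpha>) ^ m \<le> 2 ^ card V * Max (prob_denominators VP E \<delta>) ^ card V ^ 3"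
    using u m1 \<alpha>_le m_le by (intro two_mult_power_le_Max_prob_denominators[OF game]) (auto simp: \<alpha>_def)
  ultimately show ?thesis
    unfolding Let_def p_def[symmetric] \<alpha>_def[symmetric] prob_denominators_def[of VP E \<delta>, symmetric] by blast
qed

end
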